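(* Fix an integer base $b\ge 2$ and $f_*:\{0,\dots,b-1\}\to\mathbb{Z}^{\ge 0}$ with $f_*(0)=0$, $f_*(1)=1$, $\gcd(b,f_*(b-1))=1$, and suppose there is a digit $0\le m_*\le b-1$ with $\gcd(f(m_* )-m_*,f(b-1))=1$, where $f$ is the digit map $f\left(\sum_i a_ib^i\right)=\sum_i f_*(a_i)$ (base-$b$ representation). Let $u$ be a positive integer with $f^r(u)=u$ for some $r\ge 1$. Let $h$ be a $u$-integer. Then for every integer $a$ there exists a $u$-integer $l$ such that $l\equiv a \pmod{f(b-1)}$ and such that $l$ and $h$ are concurrently $u$-integers.
   Context: $f^r$ is the $r$-fold iterate of $f$. A positive integer $n$ is a $u$-integer if $f^r(n)=u$ for some $r\ge1$. Two positive integers $m,n$ are concurrently $u$-integers if there is some $r\ge 1$ with $f^r(m)=f^r(n)=u$. *)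

theory Defs
  imports "HOL-Number_Theory.Number_Theory"
begin

fun digmap :: "nat \<Rightarrow> (nat \<Rightarrow> nat) \<Rightarrow> nat \<Rightarrow> nat" where
  "digmap b fs n = (if n = 0 \<or> b < 2 then 0 else fs (n mod b) + digmap b fs (n div b))"

definition u_integer :: "nat \<Rightarrow> (nat \<Rightarrow> nat) \<Rightarrow> nat \<Rightarrow> nat \<Rightarrow> bool" where
  "u_integer b fs u n \<longleftrightarrow> n > 0 \<and> (\<exists>r\<ge>1. (digmap b fs ^^ r) n = u)"

definition concurrently_u :: "nat \<Rightarrow> (nat \<Rightarrow> nat) \<Rightarrow> nat \<Rightarrow> nat \<Rightarrow> nat \<Rightarrow> bool" where
  "concurrently_u b fs u m n \<longleftrightarrow> m > 0 \<and> n > 0 \<and>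
     (\<exists>r\<ge>1. (digmap b fs ^^ r) m = u \<and> (digmap b fs ^^ r) n = u)"

end

theory Submission
  imports Defs
begin

text \<open>Two applications of f already bring any prescribed residue class mod F = f(b-1) into contact
with h. Since b^s \<equiv> 1 (mod F) for s = \<phi>(F), a number written in base b^s with b-adic digits
from {0,...,b-1} is congruent mod F to the sum of its digits, while f only sees the b-adic
digits. Taking k digits m and w - k f(m) digits 1 gives f(l) = w and
l \<equiv> w - k (f(m) - m) (mod F), and since f(m) - m is invertible mod F, k can be chosen to reach
any residue. With w = f(h) b^T for large T we get f(f(l)) = f(f(h)), and as u is periodic
some common iterate of l and h equals u.\<close>

declare digmap.simps [simp del]

lemma digmap_0 [simp]: "digmap b fs 0 = 0"
  by (simp add: digmap.simps)

lemma digmap_funpow_0: "(digmap b fs ^^ n) 0 = 0"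
  by (induction n) simp_all

lemma digmap_mult_base_add:
  assumes "b \<ge> 2" "fs 0 = 0" "c < b"
  shows "digmap b fs (x * b + c) = digmap b fs x + fs c"
proof (cases "x * b + c = 0")
  case True
  with assms show ?thesis by simp
next
  case False
  with assms show ?thesis by (subst digmap.simps) simp
qed

lemma digmap_digit:
  assumes "b \<ge> 2" "fs 0 = 0" "c < b"
  shows "digmap b fs c = fs c"
  using digmap_mult_base_add [where b=b and fs=fs, OF assms, of 0] by simp

lemma digmap_mult_base_power:
  assumes "b \<ge> 2" "fs 0 = 0"
  shows "digmap b fs (x * b ^ k) = digmap b fs x"
proof (induction k)
  case (Suc k)
  have "digmap b fs (x * b ^ Suc k) = digmap b fs (x * b ^ k * b + 0)"
    by (simp add: algebra_simps)
  also have "\<dots> = digmap b fs (x * b ^ k) + fs 0"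
    using assms by (intro digmap_mult_base_add) simp_all
  finally show ?case
    using Suc assms by simp
qed simp

lemma digmap_mult_base_power_add:
  assumes "b \<ge> 2" "fs 0 = 0" "c < b" "s \<ge> 1"
  shows "digmap b fs (x * b ^ s + c) = digmap b fs x + fs c"
proof -
  obtain t where "s = Suc t"
    using \<open>s \<ge> 1\<close> by (cases s) auto
  then have "digmap b fs (x * b ^ s + c) = digmap b fs (x * b ^ t * b + c)"
    by (simp add: ac_simps)
  also have "\<dots> = digmap b fs (x * b ^ t) + fs c"
    by (rule digmap_mult_base_add [where b=b and fs=fs, OF assms(1-3)])
  also have "\<dots> = digmap b fs x + fs c"
    using digmap_mult_base_power [where b=b and fs=fs, OF assms(1,2)] by simp
  finally show ?thesis .
qed

lemma exists_greater_same_digmap: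
  assumes "b \<ge> 2" "fs 0 = 0" "v > 0"
  shows "\<exists>w>N. digmap b fs w = digmap b fs v"
proof -
  have "N < 2 ^ N"
    by (rule less_exp)
  also have "2 ^ N \<le> b ^ N"
    using assms(1) by (intro power_mono) auto
  also have "b ^ N \<le> v * b ^ N"
    using \<open>v > 0\<close> by simp
  finally show ?thesis
    using digmap_mult_base_power [where b=b and fs=fs, OF assms(1,2)] by blast
qed

lemma digmap_pos_if_funpow_pos:
  assumes "(digmap b fs ^^ r) h > 0" "r \<ge> 1"
  shows "digmap b fs h > 0"
proof (rule ccontr)
  assume "\<not> digmap b fs h > 0"
  obtain r' where "r = Suc r'"
    using \<open>r \<ge> 1\<close> by (cases r) auto
  then have "(digmap b fs ^^ r) h = (digmap b fs ^^ r') (digmap b fs h)"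
    by (simp add: funpow_swap1)
  with \<open>\<not> digmap b fs h > 0\<close> assms(1) show False
    by (simp add: digmap_funpow_0)
qed

lemma digmap_horner_sum_base_power:
  assumes "b \<ge> 2" "fs 0 = 0" "s \<ge> 1" "\<forall>c\<in>set cs. c < b"
  shows "digmap b fs (horner_sum id (b ^ s) cs) = sum_list (map fs cs)"
  using assms(4)
proof (induction cs)
  case (Cons c cs)
  then show ?case
    using digmap_mult_base_power_add [where b=b and fs=fs, OF assms(1,2) _ assms(3),
        of c "horner_sum id (b ^ s) cs"]
    by (simp add: id_def ac_simps)
qed simp

lemma horner_sum_cong_sum_list:
  fixes B F :: "'a :: unique_euclidean_semiring"
  assumes "[B = 1] (mod F)"
  shows "[horner_sum id B cs = sum_list cs] (mod F)"
proof (induction cs)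
  case (Cons c cs)
  have "[c + B * horner_sum id B cs = c + 1 * sum_list cs] (mod F)"
    by (intro cong_add cong_mult cong_refl assms Cons)
  then show ?case by (simp add: id_def)
qed simp

lemma exists_less_solving_linear_cong:
  fixes d c :: int and F :: nat
  assumes "coprime d (int F)" "F > 0"
  shows "\<exists>k<F. [int k * d = c] (mod int F)"
proof -
  obtain x where x: "[d * x = c] (mod int F)"
    using cong_solve_dvd_int [of d "int F" c] assms(1) by auto
  define k where "k = nat (x mod int F)"
  have k: "int k = x mod int F" "k < F"
    using \<open>F > 0\<close> by (simp_all add: k_def nat_less_iff)
  have "[int k * d = x * d] (mod int F)"
    unfolding k(1) by (intro cong_mult cong_refl) (simp add: cong_def)
  moreover have "[x * d = c] (mod int F)"
    using x by (simp add: mult.commute)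
  ultimately have "[int k * d = c] (mod int F)"
    by (rule cong_trans)
  with k show ?thesis by blast
qed

lemma digmap_preimage_in_residue_class:
  fixes a :: int
  assumes "b \<ge> 2" "fs 0 = 0" "fs 1 = 1" "coprime b F"
    and "m < b" "coprime (int (fs m) - int m) (int F)"
    and "fs m * F \<le> w"
  shows "\<exists>l. digmap b fs l = w \<and> [int l = a] (mod int F)"
proof -
  have "F > 0"
    using \<open>coprime b F\<close> \<open>b \<ge> 2\<close> by (cases "F = 0") auto
  obtain k where "k < F" and k: "[int k * (int (fs m) - int m) = int w - a] (mod int F)"
    using exists_less_solving_linear_cong [OF assms(6) \<open>F > 0\<close>] by blast
  have "fs m * k \<le> w"
    using \<open>k < F\<close> assms(7) by (meson le_trans less_imp_le_nat mult_le_mono2)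
  define cs where "cs = replicate k m @ replicate (w - fs m * k) 1"
  define s where "s = totient F"
  define l where "l = horner_sum id (b ^ s) cs"
  have "s \<ge> 1"
    using \<open>F > 0\<close> by (simp add: s_def Suc_leI)
  have "\<forall>c\<in>set cs. c < b"
    using assms(1,5) by (auto simp: cs_def)
  then have "digmap b fs l = sum_list (map fs cs)"
    unfolding l_def
    by (rule digmap_horner_sum_base_power [where b=b and fs=fs, OF assms(1,2) \<open>s \<ge> 1\<close>])
  also have "\<dots> = w"
    using \<open>fs m * k \<le> w\<close> \<open>fs 1 = 1\<close> by (simp add: cs_def sum_list_replicate mult.commute)
  finally have "digmap b fs l = w" .
  have "[b ^ s = 1] (mod F)"
    unfolding s_def using euler_theorem assms(4) by simp
  then have "[l = sum_list cs] (mod F)"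
    unfolding l_def by (rule horner_sum_cong_sum_list)
  then have "[int l = int (sum_list cs)] (mod int F)"
    by (simp add: cong_int_iff)
  also have "int (sum_list cs) = int k * int m + (int w - int (fs m) * int k)"
    using \<open>fs m * k \<le> w\<close> by (simp add: cs_def sum_list_replicate)
  also have "\<dots> = int w - int k * (int (fs m) - int m)"
    by (simp add: right_diff_distrib)
  finally have "[int l = int w - int k * (int (fs m) - int m)] (mod int F)" .
  moreover have "[int w - int k * (int (fs m) - int m) = a] (mod int F)"
    using cong_diff [OF cong_refl [of "int w"] k] by simp
  ultimately have "[int l = a] (mod int F)"
    by (rule cong_trans)
  with \<open>digmap b fs l = w\<close> show ?thesis by blast
qed

lemma exists_in_residue_class_funpow2_digmap_eq:
  fixes a :: int
  assumes "b \<ge> 2" "fs 0 = 0" "fs 1 = 1" "coprime b F"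
    and "m < b" "coprime (int (fs m) - int m) (int F)"
    and "digmap b fs v > 0"
  shows "\<exists>l>0. [int l = a] (mod int F) \<and> (digmap b fs ^^ 2) l = (digmap b fs ^^ 2) v"
proof -
  obtain w where "fs m * F < w" "digmap b fs w = digmap b fs (digmap b fs v)"
    using exists_greater_same_digmap [where b=b and fs=fs, OF assms(1,2,7)] by blast
  moreover obtain l where "digmap b fs l = w" "[int l = a] (mod int F)"
    using digmap_preimage_in_residue_class [where b=b and fs=fs, OF assms(1-6), of w a]
      \<open>fs m * F < w\<close> by auto
  moreover have "l > 0"
    using \<open>digmap b fs l = w\<close> \<open>fs m * F < w\<close> by (cases "l = 0") auto
  ultimately show ?thesis
    by (auto simp: numeral_2_eq_2)
qed

lemma funpow_meet_periodic:
  assumes "(f ^^ r) h = u" "(f ^^ p) u = u" "p \<ge> 1" "(f ^^ j) l = (f ^^ j) h"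
  shows "(f ^^ (p * j + r)) l = u \<and> (f ^^ (p * j + r)) h = u"
proof -
  have h: "(f ^^ (p * j + r)) h = u"
    using funpow_mod_eq [OF assms(2), of "p * j"] assms(1) by (simp add: funpow_add)
  have "j \<le> p * j + r"
    using \<open>p \<ge> 1\<close> by (simp add: trans_le_add1)
  then obtain i where i: "p * j + r = i + j"
    using le_add_diff_inverse2 by metis
  have "(f ^^ (p * j + r)) l = (f ^^ (p * j + r)) h"
    unfolding i funpow_add comp_apply assms(4) ..
  with h show ?thesis by simp
qed

theorem lemma2p3:
  fixes b :: nat and fs :: "nat \<Rightarrow> nat" and u h :: nat and a :: int
  assumes "b \<ge> 2"
    and "fs 0 = 0" and "fs 1 = 1"
    and "coprime b (fs (b - 1))"
    and "\<exists>m\<le>b - 1. gcd (int (digmap b fs m) - int m) (int (digmap b fs (b - 1))) = 1"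
    and "u > 0" and "\<exists>r\<ge>1. (digmap b fs ^^ r) u = u"
    and "u_integer b fs u h"
  shows "\<exists>l. u_integer b fs u l \<and> [int l = a] (mod int (digmap b fs (b - 1)))
              \<and> concurrently_u b fs u l h"
proof -
  let ?f = "digmap b fs"
  let ?F = "fs (b - 1)"
  have digit: "c < b \<Longrightarrow> ?f c = fs c" for c
    using digmap_digit [where b=b and fs=fs, OF assms(1,2)] .
  have "?f (b - 1) = ?F"
    using digit assms(1) by simp
  obtain m where "m \<le> b - 1" and gcd_m: "gcd (int (?f m) - int m) (int (?f (b - 1))) = 1"
    using assms(5) by (elim exE conjE) (rule that)
  then have "m < b"
    using assms(1) by linarith
  with gcd_m have "coprime (int (fs m) - int m) (int ?F)"
    unfolding coprime_iff_gcd_eq_1 using digit \<open>?f (b - 1) = ?F\<close> by simp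
  obtain r p where "r \<ge> 1" "(?f ^^ r) h = u" "h > 0" "p \<ge> 1" "(?f ^^ p) u = u"
    using assms(7,8) unfolding u_integer_def by blast
  then have "?f h > 0"
    using \<open>u > 0\<close> digmap_pos_if_funpow_pos [where b=b and fs=fs and r=r and h=h] by simp
  then obtain l where "l > 0" "[int l = a] (mod int ?F)" "(?f ^^ 2) l = (?f ^^ 2) h"
    using exists_in_residue_class_funpow2_digmap_eq [where b=b and fs=fs, OF assms(1-4)
        \<open>m < b\<close> \<open>coprime (int (fs m) - int m) (int ?F)\<close>] by blast
  have "(?f ^^ (p * 2 + r)) l = u \<and> (?f ^^ (p * 2 + r)) h = u"
    using \<open>(?f ^^ 2) l = (?f ^^ 2) h\<close>
    by (rule funpow_meet_periodic [OF \<open>(?f ^^ r) h = u\<close> \<open>(?f ^^ p) u = u\<close> \<open>p \<ge> 1\<close>])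
  moreover have "p * 2 + r \<ge> 1"
    using \<open>r \<ge> 1\<close> by simp
  ultimately show ?thesis
    using \<open>l > 0\<close> \<open>h > 0\<close> \<open>[int l = a] (mod int ?F)\<close> \<open>?f (b - 1) = ?F\<close>
    unfolding u_integer_def concurrently_u_def by metis
qed

end
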